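(* Every maximal biflag of $M$ (maximal with respect to inclusion among biflags) has length exactly $n-1$.
   Context: Let $M$ be a matroid with no loops and no coloops on the ground set $E=\{0,1,\dots,n\}$, of rank $r+1$; its dual $M^\perp$ has rank $n-r$. A biflat of $M$ is a pair $F|G$ where $F$ is a flat of $M$, $G$ is a flat of $M^\perp$, both are nonempty, they are not both equal to $E$, and $F\cup G=E$. Two biflats $F|G$, $F'|G'$ are compatible if ($F\subseteq F'$ and $G\supseteq G'$) or ($F\supseteq F'$ and $G\subseteq G'$). A biflag is a set of pairwise compatible biflats with $\bigcup_{F|G}(F\cap G)\neq E$; its length is its number of biflats. *)

theory Defs
  imports Main
begin

definition matroid :: "'a set \<Rightarrow> ('a set \<Rightarrow> bool) \<Rightarrow> bool" where
  "matroid E indep \<longleftrightarrow> finite E \<and> indep {} \<and>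
     (\<forall>I. indep I \<longrightarrow> I \<subseteq> E) \<and>
     (\<forall>I J. indep J \<and> I \<subseteq> J \<longrightarrow> indep I) \<and>
     (\<forall>I J. indep I \<and> indep J \<and> card I < card J \<longrightarrow> (\<exists>x\<in>J - I. indep (insert x I)))"

definition mrank :: "('a set \<Rightarrow> bool) \<Rightarrow> 'a set \<Rightarrow> nat" where
  "mrank indep A = Max {card I | I. I \<subseteq> A \<and> indep I}"

definition basis :: "'a set \<Rightarrow> ('a set \<Rightarrow> bool) \<Rightarrow> 'a set \<Rightarrow> bool" where
  "basis E indep B \<longleftrightarrow> indep B \<and> (\<forall>x\<in>E - B. \<not> indep (insert x B))"

definition dual_indep :: "'a set \<Rightarrow> ('a set \<Rightarrow> bool) \<Rightarrow> 'a set \<Rightarrow> bool" where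
  "dual_indep E indep I \<longleftrightarrow> I \<subseteq> E \<and> (\<exists>B. basis E indep B \<and> I \<inter> B = {})"

definition flat :: "'a set \<Rightarrow> ('a set \<Rightarrow> bool) \<Rightarrow> 'a set \<Rightarrow> bool" where
  "flat E indep F \<longleftrightarrow> F \<subseteq> E \<and> (\<forall>x\<in>E - F. mrank indep (insert x F) > mrank indep F)"

definition loop :: "'a set \<Rightarrow> ('a set \<Rightarrow> bool) \<Rightarrow> 'a \<Rightarrow> bool" where
  "loop E indep x \<longleftrightarrow> x \<in> E \<and> \<not> indep {x}"

definition coloop :: "'a set \<Rightarrow> ('a set \<Rightarrow> bool) \<Rightarrow> 'a \<Rightarrow> bool" where
  "coloop E indep x \<longleftrightarrow> x \<in> E \<and> (\<forall>B. basis E indep B \<longrightarrow> x \<in> B)"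

definition biflat :: "'a set \<Rightarrow> ('a set \<Rightarrow> bool) \<Rightarrow> 'a set \<times> 'a set \<Rightarrow> bool" where
  "biflat E indep FG \<longleftrightarrow> (case FG of (F, G) \<Rightarrow>
     flat E indep F \<and> flat E (dual_indep E indep) G \<and> F \<noteq> {} \<and> G \<noteq> {} \<and>
     \<not> (F = E \<and> G = E) \<and> F \<union> G = E)"

definition compatible :: "'a set \<times> 'a set \<Rightarrow> 'a set \<times> 'a set \<Rightarrow> bool" where
  "compatible FG FG' \<longleftrightarrow> (case FG of (F, G) \<Rightarrow> case FG' of (F', G') \<Rightarrow>
     (F \<subseteq> F' \<and> G \<supseteq> G') \<or> (F \<supseteq> F' \<and> G \<subseteq> G'))"

definition biflag :: "'a set \<Rightarrow> ('a set \<Rightarrow> bool) \<Rightarrow> ('a set \<times> 'a set) set \<Rightarrow> bool" where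
  "biflag E indep S \<longleftrightarrow> (\<forall>FG\<in>S. biflat E indep FG) \<and>
     (\<forall>FG\<in>S. \<forall>FG'\<in>S. compatible FG FG') \<and>
     (\<Union>(F, G)\<in>S. F \<inter> G) \<noteq> E"

definition maximal_biflag :: "'a set \<Rightarrow> ('a set \<Rightarrow> bool) \<Rightarrow> ('a set \<times> 'a set) set \<Rightarrow> bool" where
  "maximal_biflag E indep S \<longleftrightarrow> biflag E indep S \<and>
     (\<forall>T. biflag E indep T \<and> S \<subseteq> T \<longrightarrow> T = S)"

end

theory Submission
  imports Defs
begin

text \<open>Pick a point y outside every intersection F \<inter> G of the maximal biflag; then all its
  biflats avoid y. On y-avoiding biflats, ordered by F \<subseteq> F' and G' \<subseteq> G, the potential
  r F + r* E - r* G - [y \<notin> G] (r, r* the ranks of M and its dual) is strictly increasing with values in 1 .. |E| - 2, and any value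
  missed by a chain can be filled by a new compatible biflat, because between two flats whose
  ranks differ by at least 2 there is an intermediate flat avoiding any prescribed point.
  So a maximal biflag realises each value exactly once and has |E| - 2 = n - 1 members.\<close>

locale gap_filling_potential =
  fixes le :: "'p \<Rightarrow> 'p \<Rightarrow> bool" and P :: "'p set" and f :: "'p \<Rightarrow> int" and N :: int
  assumes le_trans: "le p q \<Longrightarrow> le q s \<Longrightarrow> le p s"
    and f_strict_mono: "p \<in> P \<Longrightarrow> q \<in> P \<Longrightarrow> le p q \<Longrightarrow> p \<noteq> q \<Longrightarrow> f p < f q"
    and f_range: "p \<in> P \<Longrightarrow> f p \<in> {1..N}"
    and nonempty: "1 \<le> N \<Longrightarrow> P \<noteq> {}"
    and extend_below: "p \<in> P \<Longrightarrow> 1 < f p \<Longrightarrow> \<exists>q\<in>P. le q p \<and> q \<noteq> p"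
    and extend_above: "p \<in> P \<Longrightarrow> f p < N \<Longrightarrow> \<exists>q\<in>P. le p q \<and> q \<noteq> p"
    and refine: "p \<in> P \<Longrightarrow> q \<in> P \<Longrightarrow> le p q \<Longrightarrow> f p + 2 \<le> f q \<Longrightarrow>
       \<exists>s\<in>P. le p s \<and> le s q \<and> s \<noteq> p \<and> s \<noteq> q"
begin

abbreviation lt :: "'p \<Rightarrow> 'p \<Rightarrow> bool" where
  "lt p q \<equiv> le p q \<and> p \<noteq> q"

lemma le_lt_trans:
  assumes "p \<in> P" "x \<in> P" "le s p" "lt p x"
  shows "lt s x"
proof
  show "le s x" using assms le_trans by blast
  show "s \<noteq> x"
  proof
    assume "s = x"
    then have "f x < f p" using assms f_strict_mono[of x p] by blast
    moreover have "f p < f x" using assms f_strict_mono[of p x] by blast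
    ultimately show False by simp
  qed
qed

lemma lt_le_trans:
  assumes "p \<in> P" "x \<in> P" "lt x p" "le p s"
  shows "lt x s"
proof
  show "le x s" using assms le_trans by blast
  show "x \<noteq> s"
  proof
    assume "x = s"
    then have "f p < f x" using assms f_strict_mono[of p x] by blast
    moreover have "f x < f p" using assms f_strict_mono[of x p] by blast
    ultimately show False by simp
  qed
qed

lemma chain_le_of_le:
  assumes "Complete_Partial_Order.chain le S" "S \<subseteq> P" "p \<in> S" "q \<in> S" "f p \<le> f q"
  shows "le p q"
proof (rule ccontr)
  assume "\<not> le p q"
  then have "le q p" "q \<noteq> p" using chainD[OF assms(1,3,4)] by auto
  then have "f q < f p" using f_strict_mono assms by blast
  then show False using assms(5) by simp
qed

lemma inj_on_chain:
  assumes "Complete_Partial_Order.chain le S" "S \<subseteq> P"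
  shows "inj_on f S"
proof (rule inj_onI, rule ccontr)
  fix p q assume pq: "p \<in> S" "q \<in> S" "f p = f q" "p \<noteq> q"
  then have "le p q" using chain_le_of_le[OF assms] by simp
  then have "f p < f q" using f_strict_mono pq assms by blast
  then show False using pq by simp
qed

lemma gap_element:
  assumes chain: "Complete_Partial_Order.chain le S" "S \<subseteq> P" and v: "v \<in> {1..N}" "v \<notin> f ` S"
  shows "\<exists>x\<in>P. (\<forall>s\<in>S. f s < v \<longrightarrow> lt s x) \<and> (\<forall>s\<in>S. v < f s \<longrightarrow> lt x s)"
proof -
  define Lower where "Lower = {s\<in>S. f s < v}"
  define Upper where "Upper = {s\<in>S. v < f s}"
  have "f ` Lower \<subseteq> {1..N}" "f ` Upper \<subseteq> {1..N}"
    using f_range chain(2) unfolding Lower_def Upper_def by auto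
  then have fin: "finite (f ` Lower)" "finite (f ` Upper)"
    using finite_subset by blast+
  have Lower_S: "Lower \<subseteq> S" and Upper_S: "Upper \<subseteq> S" unfolding Lower_def Upper_def by auto
  have Lower_below: "\<forall>s\<in>Lower. lt s x"
    if a: "a \<in> Lower" "f a = Max (f ` Lower)" and x: "x \<in> P" "lt a x" for a x
  proof
    fix s assume "s \<in> Lower"
    then have "f s \<le> f a" using a(2) fin by simp
    then have "le s a" using chain_le_of_le[OF chain] Lower_S a \<open>s \<in> Lower\<close> by blast
    then show "lt s x" using le_lt_trans a x Lower_S chain by blast
  qed
  have Upper_above: "\<forall>s\<in>Upper. lt x s"
    if z: "z \<in> Upper" "f z = Min (f ` Upper)" and x: "x \<in> P" "lt x z" for z x
  proof
    fix s assume "s \<in> Upper"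
    then have "f z \<le> f s" using z(2) fin by simp
    then have "le z s" using chain_le_of_le[OF chain] Upper_S z \<open>s \<in> Upper\<close> by blast
    then show "lt x s" using lt_le_trans z x Upper_S chain by blast
  qed
  have max_Lower: "\<exists>a\<in>Lower. f a = Max (f ` Lower)" if "Lower \<noteq> {}"
    using Max_in[OF fin(1)] that by (metis image_iff image_is_empty)
  have min_Upper: "\<exists>z\<in>Upper. f z = Min (f ` Upper)" if "Upper \<noteq> {}"
    using Min_in[OF fin(2)] that by (metis image_iff image_is_empty)
  have "\<exists>x\<in>P. (\<forall>s\<in>Lower. lt s x) \<and> (\<forall>s\<in>Upper. lt x s)"
  proof (cases "Lower = {}"; cases "Upper = {}")
    assume "Lower = {}" "Upper = {}"
    moreover obtain x where "x \<in> P" using nonempty v by fastforce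
    ultimately show ?thesis by blast
  next
    assume "Lower \<noteq> {}" "Upper = {}"
    then obtain a where a: "a \<in> Lower" "f a = Max (f ` Lower)" using max_Lower by blast
    have "a \<in> P" "f a < N" using a Lower_S chain v unfolding Lower_def by auto
    then obtain x where "x \<in> P" "lt a x" using extend_above by blast
    then show ?thesis using Lower_below[OF a] \<open>Upper = {}\<close> by blast
  next
    assume "Lower = {}" "Upper \<noteq> {}"
    then obtain z where z: "z \<in> Upper" "f z = Min (f ` Upper)" using min_Upper by blast
    have "z \<in> P" "1 < f z" using z Upper_S chain v unfolding Upper_def by auto
    then obtain x where "x \<in> P" "lt x z" using extend_below by blast
    then show ?thesis using Upper_above[OF z] \<open>Lower = {}\<close> by blast
  next
    assume "Lower \<noteq> {}" "Upper \<noteq> {}"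
    then obtain a z where a: "a \<in> Lower" "f a = Max (f ` Lower)"
      and z: "z \<in> Upper" "f z = Min (f ` Upper)"
      using max_Lower min_Upper by blast
    have "a \<in> P" "z \<in> P" "f a + 2 \<le> f z"
      using a z Lower_S Upper_S chain unfolding Lower_def Upper_def by auto
    moreover have "le a z"
      by (rule chain_le_of_le[OF chain]) (use a z Lower_S Upper_S \<open>f a + 2 \<le> f z\<close> in auto)
    ultimately obtain x where "x \<in> P" "lt a x" "lt x z" using refine by blast
    then show ?thesis using Lower_below[OF a] Upper_above[OF z] by blast
  qed
  then show ?thesis unfolding Lower_def Upper_def by blast
qed

lemma card_maximal_chain:
  assumes chain: "Complete_Partial_Order.chain le S" "S \<subseteq> P"
    and maximal: "\<And>x. x \<in> P \<Longrightarrow> \<forall>s\<in>S. le x s \<or> le s x \<Longrightarrow> x \<in> S"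
  shows "card S = nat N"
proof -
  have "{1..N} \<subseteq> f ` S"
  proof (rule subsetI, rule ccontr)
    fix v assume v: "v \<in> {1..N}" "v \<notin> f ` S"
    then obtain x where x: "x \<in> P" and lo: "\<forall>s\<in>S. f s < v \<longrightarrow> lt s x"
      and hi: "\<forall>s\<in>S. v < f s \<longrightarrow> lt x s"
      using gap_element[OF chain] by blast
    have v_missing: "f s \<noteq> v" if "s \<in> S" for s using v that by auto
    then have "x \<in> S" using maximal[OF x] lo hi by (meson linorder_neqE)
    with lo hi v_missing[of x] show False by (auto simp: neq_iff)
  qed
  then have "f ` S = {1..N}" using f_range chain by auto
  then show ?thesis using card_image[OF inj_on_chain[OF chain]] by simp
qed

end

locale matroid_on =
  fixes E :: "'a set" and indep :: "'a set \<Rightarrow> bool"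
  assumes matroid: "matroid E indep"
begin

abbreviation rank :: "'a set \<Rightarrow> nat" where
  "rank \<equiv> mrank indep"

lemma finite_ground: "finite E"
  using matroid unfolding matroid_def by blast

lemma indep_subset_ground: "indep I \<Longrightarrow> I \<subseteq> E"
  using matroid unfolding matroid_def by blast

lemma indep_finite: "indep I \<Longrightarrow> finite I"
  using indep_subset_ground finite_ground finite_subset by blast

lemma indep_empty: "indep {}"
  using matroid unfolding matroid_def by blast

lemma indep_subset: "indep J \<Longrightarrow> I \<subseteq> J \<Longrightarrow> indep I"
  using matroid unfolding matroid_def by blast

lemma indep_augment: "indep I \<Longrightarrow> indep J \<Longrightarrow> card I < card J \<Longrightarrow> \<exists>x\<in>J - I. indep (insert x I)"
  using matroid unfolding matroid_def by blast

lemma finite_card_indep_subsets: "finite {card I | I. I \<subseteq> A \<and> indep I}"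
proof -
  have "{card I | I. I \<subseteq> A \<and> indep I} \<subseteq> card ` Pow E"
    using indep_subset_ground by blast
  then show ?thesis using finite_ground finite_subset by blast
qed

lemma card_le_rank: "I \<subseteq> A \<Longrightarrow> indep I \<Longrightarrow> card I \<le> rank A"
  unfolding mrank_def using finite_card_indep_subsets by (intro Max_ge) auto

lemma rank_witness:
  obtains I where "I \<subseteq> A" "indep I" "card I = rank A"
proof -
  have "rank A \<in> {card I | I. I \<subseteq> A \<and> indep I}"
    unfolding mrank_def using finite_card_indep_subsets indep_empty by (intro Max_in) auto
  then show ?thesis using that by auto
qed

lemma rank_mono: "A \<subseteq> B \<Longrightarrow> rank A \<le> rank B"
proof -
  assume "A \<subseteq> B"
  obtain I where "I \<subseteq> A" "indep I" "card I = rank A" by (rule rank_witness)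
  then show ?thesis using card_le_rank[of I B] \<open>A \<subseteq> B\<close> by simp
qed

lemma rank_le_card: "finite A \<Longrightarrow> rank A \<le> card A"
proof -
  assume "finite A"
  obtain I where I: "I \<subseteq> A" "card I = rank A" using rank_witness by metis
  then show ?thesis using card_mono[OF \<open>finite A\<close> I(1)] by simp
qed

lemma rank_empty: "rank {} = 0"
  using rank_le_card[of "{}"] by simp

lemma rank_insert_le: "rank (insert x A) \<le> Suc (rank A)"
proof -
  obtain I where I: "I \<subseteq> insert x A" "indep I" "card I = rank (insert x A)"
    by (rule rank_witness)
  have "card (I - {x}) \<le> rank A"
    using I indep_subset by (intro card_le_rank) auto
  moreover have "card I \<le> Suc (card (I - {x}))"
    by (cases "x \<in> I") (auto simp: card_Suc_Diff1 indep_finite I(2))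
  ultimately show ?thesis using I by simp
qed

lemma rank_Un_le_card: "finite B \<Longrightarrow> rank (A \<union> B) \<le> rank A + card B"
proof (induction B rule: finite_induct)
  case (insert x B)
  then show ?case using rank_insert_le[of x "A \<union> B"] by simp
qed simp

lemma indep_extend:
  "indep I \<Longrightarrow> I \<subseteq> X \<Longrightarrow> \<exists>J. I \<subseteq> J \<and> J \<subseteq> X \<and> indep J \<and> card J = rank X"
proof (induction "rank X - card I" arbitrary: I rule: less_induct)
  case less
  obtain K where K: "K \<subseteq> X" "indep K" "card K = rank X" by (rule rank_witness)
  have "card I \<le> rank X" using card_le_rank less.prems by blast
  show ?case
  proof (cases "card I = rank X")
    case False
    then obtain x where x: "x \<in> K - I" "indep (insert x I)"
      using indep_augment[of I K] less.prems K \<open>card I \<le> rank X\<close> by auto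
    have "rank X - card (insert x I) < rank X - card I"
      using x False \<open>card I \<le> rank X\<close> indep_finite[OF less.prems(1)] by simp
    moreover have "insert x I \<subseteq> X" using x K less.prems by blast
    ultimately show ?thesis using less.hyps[OF _ x(2)] by blast
  qed (use less.prems in blast)
qed

lemma rank_submodular: "rank (A \<union> B) + rank (A \<inter> B) \<le> rank A + rank B"
proof -
  obtain I where I: "I \<subseteq> A \<inter> B" "indep I" "card I = rank (A \<inter> B)" by (rule rank_witness)
  obtain J where J: "I \<subseteq> J" "J \<subseteq> A \<union> B" "indep J" "card J = rank (A \<union> B)"
    using indep_extend[OF I(2), of "A \<union> B"] I by blast
  have fin: "finite J" using indep_finite J by blast
  have "card (J \<inter> A) \<le> rank A" "card (J \<inter> B) \<le> rank B"
    using card_le_rank indep_subset J by auto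
  moreover have "card (J \<inter> A \<inter> B) = card I"
  proof (rule antisym)
    show "card (J \<inter> A \<inter> B) \<le> card I"
      using card_le_rank[of "J \<inter> A \<inter> B" "A \<inter> B"] indep_subset[OF J(3), of "J \<inter> A \<inter> B"] I by auto
    show "card I \<le> card (J \<inter> A \<inter> B)"
      using fin I J by (intro card_mono) auto
  qed
  moreover have "(J \<inter> A) \<union> (J \<inter> B) = J" "(J \<inter> A) \<inter> (J \<inter> B) = J \<inter> A \<inter> B"
    using J(2) by blast+
  then have "card (J \<inter> A) + card (J \<inter> B) = card J + card (J \<inter> A \<inter> B)"
    using card_Un_Int[of "J \<inter> A" "J \<inter> B"] fin by simp
  ultimately show ?thesis using I J by linarith
qed

lemma rank_Diff_add_card_le:
  assumes "finite D" and "\<And>x. x \<in> D \<Longrightarrow> rank (X - {x}) < rank X"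
  shows "rank (X - D) + card D \<le> rank X"
  using assms
proof (induction D rule: finite_induct)
  case (insert x D)
  have "(X - {x}) \<union> (X - D) = X" "(X - {x}) \<inter> (X - D) = X - insert x D"
    using insert.hyps(2) by auto
  then have "rank X + rank (X - insert x D) \<le> rank (X - {x}) + rank (X - D)"
    using rank_submodular[of "X - {x}" "X - D"] by simp
  moreover have "rank (X - {x}) < rank X" "rank (X - D) + card D \<le> rank X"
    using insert by auto
  ultimately show ?case using insert.hyps by simp
qed simp

definition closure :: "'a set \<Rightarrow> 'a set" where
  "closure A = {e \<in> E. rank (insert e A) = rank A}"

lemma closure_subset_ground: "closure A \<subseteq> E"
  unfolding closure_def by blast

lemma subset_closure: "A \<subseteq> E \<Longrightarrow> A \<subseteq> closure A"
  unfolding closure_def by (auto simp: insert_absorb)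

lemma rank_Un_closure: "finite D \<Longrightarrow> D \<subseteq> closure A \<Longrightarrow> rank (A \<union> D) = rank A"
proof (induction D rule: finite_induct)
  case (insert e D)
  have e: "rank (insert e A) = rank A" using insert unfolding closure_def by blast
  have "(A \<union> D) \<union> insert e A = A \<union> insert e D" by blast
  moreover have "rank A \<le> rank ((A \<union> D) \<inter> insert e A)" by (rule rank_mono) blast
  ultimately have "rank (A \<union> insert e D) \<le> rank A"
    using rank_submodular[of "A \<union> D" "insert e A"] insert e by simp
  moreover have "rank A \<le> rank (A \<union> insert e D)" by (rule rank_mono) blast
  ultimately show ?case by simp
qed simp

lemma rank_closure: "A \<subseteq> E \<Longrightarrow> rank (closure A) = rank A"
proof -
  assume "A \<subseteq> E"
  then have "A \<union> closure A = closure A" using subset_closure by blast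
  moreover have "finite (closure A)" using finite_ground closure_subset_ground finite_subset by blast
  ultimately show ?thesis using rank_Un_closure[of "closure A" A] by simp
qed

lemma flat_closure: "A \<subseteq> E \<Longrightarrow> flat E indep (closure A)"
  unfolding flat_def
proof (intro conjI ballI)
  assume A: "A \<subseteq> E"
  show "closure A \<subseteq> E" by (rule closure_subset_ground)
  fix x assume x: "x \<in> E - closure A"
  have "rank A < rank (insert x A)"
    using x rank_mono[of A "insert x A"] unfolding closure_def by fastforce
  also have "\<dots> \<le> rank (insert x (closure A))"
    using subset_closure[OF A] by (intro rank_mono) blast
  finally show "rank (closure A) < rank (insert x (closure A))" using rank_closure[OF A] by simp
qed

lemma closure_least: "flat E indep F \<Longrightarrow> A \<subseteq> F \<Longrightarrow> closure A \<subseteq> F"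
proof
  fix e assume F: "flat E indep F" and AF: "A \<subseteq> F" and e: "e \<in> closure A"
  show "e \<in> F"
  proof (rule ccontr)
    assume e_notin: "e \<notin> F"
    then have "rank F < rank (insert e F)"
      using F e closure_subset_ground unfolding flat_def by blast
    moreover have "F \<union> insert e A = insert e F" "F \<inter> insert e A = A"
      using AF e_notin by auto
    moreover have "rank (insert e A) = rank A" using e unfolding closure_def by blast
    ultimately show False using rank_submodular[of F "insert e A"] by simp
  qed
qed

lemma rank_insert_closure:
  assumes "A \<subseteq> E" "x \<in> E"
  shows "rank (insert x (closure A)) = rank (insert x A)"
proof (rule antisym)
  have "closure A \<subseteq> closure (insert x A)"
    using assms subset_closure[of "insert x A"] by (intro closure_least flat_closure) auto
  then have "insert x (closure A) \<subseteq> closure (insert x A)"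
    using assms subset_closure[of "insert x A"] by auto
  then have "rank (insert x (closure A)) \<le> rank (closure (insert x A))" by (rule rank_mono)
  also have "\<dots> = rank (insert x A)" using rank_closure assms by simp
  finally show "rank (insert x (closure A)) \<le> rank (insert x A)" .
  show "rank (insert x A) \<le> rank (insert x (closure A))"
    using subset_closure[OF assms(1)] by (intro rank_mono) blast
qed

lemma flat_subset_ground: "flat E indep F \<Longrightarrow> F \<subseteq> E"
  unfolding flat_def by blast

lemma flat_ground: "flat E indep E"
  unfolding flat_def by simp

lemma rank_insert_flat: "flat E indep F \<Longrightarrow> x \<in> E - F \<Longrightarrow> rank (insert x F) = Suc (rank F)"
proof -
  assume "flat E indep F" "x \<in> E - F"
  then have "rank F < rank (insert x F)" unfolding flat_def by blast
  then show ?thesis using rank_insert_le[of x F] by simp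
qed

lemma rank_flat_psubset: "flat E indep F \<Longrightarrow> F \<subset> F' \<Longrightarrow> F' \<subseteq> E \<Longrightarrow> rank F < rank F'"
proof -
  assume F: "flat E indep F" and "F \<subset> F'" "F' \<subseteq> E"
  then obtain x where x: "x \<in> F'" "x \<notin> F" by blast
  then have "rank F < rank (insert x F)" using F \<open>F' \<subseteq> E\<close> rank_insert_flat by auto
  also have "\<dots> \<le> rank F'" using x \<open>F \<subset> F'\<close> by (intro rank_mono) blast
  finally show ?thesis .
qed

lemma rank_pos: "x \<in> A \<Longrightarrow> indep {x} \<Longrightarrow> 0 < rank A"
  using card_le_rank[of "{x}" A] by simp

lemma flat_empty_if_singletons_indep: "(\<And>x. x \<in> E \<Longrightarrow> indep {x}) \<Longrightarrow> flat E indep {}"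
  unfolding flat_def using rank_pos[of _ "{_}"] rank_empty by auto

lemma flat_between_avoiding:
  assumes F: "flat E indep F" and F': "flat E indep F'" and "F \<subseteq> F'"
    and rank_gap: "rank F + 2 \<le> rank F'" and y: "y \<in> E - F"
  shows "\<exists>F''. flat E indep F'' \<and> F \<subset> F'' \<and> F'' \<subset> F' \<and> y \<notin> F''"
proof -
  have FE: "F \<subseteq> E" and F'E: "F' \<subseteq> E" using F F' flat_subset_ground by auto
  define H where "H = closure (insert y F)"
  have flat_H: "flat E indep H" unfolding H_def using flat_closure FE y by simp
  have rank_H: "rank H = Suc (rank F)"
    unfolding H_def using rank_closure rank_insert_flat[OF F y] FE y by simp
  have "\<not> F' \<subseteq> H" using rank_mono[of F' H] rank_H rank_gap by auto
  then obtain x where x: "x \<in> F'" "x \<notin> H" by auto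
  have yFH: "insert y F \<subseteq> H" unfolding H_def using subset_closure[of "insert y F"] FE y by simp
  have xE: "x \<in> E" and xF: "x \<notin> F" using x F'E yFH by auto
  define F'' where "F'' = closure (insert x F)"
  have flat'': "flat E indep F''" unfolding F''_def using flat_closure FE xE by simp
  have "insert x F \<subseteq> F''" unfolding F''_def using subset_closure[of "insert x F"] FE xE by simp
  then have "F \<subset> F''" using xF by auto
  have "F'' \<subseteq> F'" unfolding F''_def using closure_least[OF F'] x(1) \<open>F \<subseteq> F'\<close> by simp
  moreover have rank'': "rank F'' = Suc (rank F)"
    unfolding F''_def using rank_closure rank_insert_flat[OF F] FE xE xF by simp
  ultimately have "F'' \<subset> F'" using rank_gap by auto
  \<comment> \<open>exchange: y in the closure of F + x but not in F would put x into the closure H of F + y\<close>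
  have "y \<notin> F''"
  proof
    assume "y \<in> F''"
    then have "rank (insert y (insert x F)) = Suc (rank F)"
      using rank'' rank_insert_flat[OF F] xE xF unfolding F''_def closure_def by simp
    moreover have "rank (insert x H) = Suc (Suc (rank F))"
      using rank_insert_flat[OF flat_H] rank_H x xE by simp
    moreover have "rank (insert x H) = rank (insert y (insert x F))"
      using rank_insert_closure[of "insert y F" x] FE y xE unfolding H_def by (simp add: insert_commute)
    ultimately show False by simp
  qed
  then show ?thesis using flat'' \<open>F \<subset> F''\<close> \<open>F'' \<subset> F'\<close> by blast
qed

lemma flat_between:
  assumes "flat E indep F" "flat E indep F'" "F \<subseteq> F'" "rank F + 2 \<le> rank F'"
  shows "\<exists>F''. flat E indep F'' \<and> F \<subset> F'' \<and> F'' \<subset> F' \<and> (y \<notin> F \<longrightarrow> y \<notin> F'')"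
proof -
  have "F \<noteq> F'" using assms(4) by auto
  then obtain z where z: "z \<in> F' - F" using assms(3) by blast
  define w where "w = (if y \<in> E - F then y else z)"
  have "w \<in> E - F" using z assms(2) flat_subset_ground unfolding w_def by auto
  then obtain F'' where F'': "flat E indep F''" "F \<subset> F''" "F'' \<subset> F'" "w \<notin> F''"
    using flat_between_avoiding[OF assms] by meson
  moreover have "y \<notin> F''" if "y \<notin> F"
  proof (cases "y \<in> E")
    case True
    then show ?thesis using F''(4) that unfolding w_def by simp
  next
    case False
    then show ?thesis using F''(3) assms(2) flat_subset_ground by blast
  qed
  ultimately show ?thesis by blast
qed

lemma basis_card: "basis E indep B \<Longrightarrow> card B = rank E"
proof -
  assume B: "basis E indep B"
  obtain K where K: "K \<subseteq> E" "indep K" "card K = rank E" by (rule rank_witness)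
  have "card B \<le> rank E" using card_le_rank indep_subset_ground B unfolding basis_def by blast
  moreover have "\<not> card B < card K"
    using indep_augment[of B K] B K unfolding basis_def by blast
  ultimately show ?thesis using K by simp
qed

lemma basis_if_card_rank: "K \<subseteq> E \<Longrightarrow> indep K \<Longrightarrow> card K = rank E \<Longrightarrow> basis E indep K"
  unfolding basis_def
proof (intro conjI ballI notI)
  fix x assume K: "K \<subseteq> E" "indep K" "card K = rank E" and x: "x \<in> E - K" "indep (insert x K)"
  then have "card (insert x K) \<le> rank E" using card_le_rank indep_subset_ground by blast
  then show False using x K indep_finite by simp
qed

lemma dual_indep_iff: "dual_indep E indep I \<longleftrightarrow> I \<subseteq> E \<and> rank (E - I) = rank E"
proof
  assume "dual_indep E indep I"
  then obtain B where B: "basis E indep B" "I \<inter> B = {}" "I \<subseteq> E"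
    unfolding dual_indep_def by blast
  then have "B \<subseteq> E - I" using indep_subset_ground unfolding basis_def by blast
  then have "rank E \<le> rank (E - I)" using card_le_rank B basis_card unfolding basis_def by metis
  then show "I \<subseteq> E \<and> rank (E - I) = rank E" using rank_mono[of "E - I" E] B by auto
next
  assume I: "I \<subseteq> E \<and> rank (E - I) = rank E"
  obtain K where "K \<subseteq> E - I" "indep K" "card K = rank (E - I)" by (rule rank_witness)
  then show "dual_indep E indep I"
    using basis_if_card_rank[of K] I unfolding dual_indep_def by auto
qed

lemma dual_indep_augment:
  assumes I: "dual_indep E indep I" and J: "dual_indep E indep J" and "card I < card J"
  shows "\<exists>x\<in>J - I. dual_indep E indep (insert x I)"
proof (rule ccontr)
  assume none: "\<not> (\<exists>x\<in>J - I. dual_indep E indep (insert x I))"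
  have IE: "I \<subseteq> E" "rank (E - I) = rank E" and JE: "J \<subseteq> E" "rank (E - J) = rank E"
    using I J dual_indep_iff by auto
  have fin: "finite I" "finite J" using IE JE finite_ground finite_subset by auto
  have "rank (E - I - {x}) < rank (E - I)" if "x \<in> J - I" for x
  proof -
    have "rank (E - insert x I) \<noteq> rank E" using none that JE IE dual_indep_iff by auto
    moreover have "rank (E - insert x I) \<le> rank E" by (rule rank_mono) auto
    moreover have "E - I - {x} = E - insert x I" by blast
    ultimately show ?thesis using IE(2) by simp
  qed
  then have "rank (E - I - (J - I)) + card (J - I) \<le> rank E"
    using rank_Diff_add_card_le[of "J - I" "E - I"] fin IE by simp
  moreover have "rank E \<le> rank (E - I - (J - I)) + card (I - J)"
  proof -
    have "rank E = rank (E - J)" using JE by simp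
    also have "\<dots> \<le> rank ((E - I - (J - I)) \<union> (I - J))" by (rule rank_mono) auto
    also have "\<dots> \<le> rank (E - I - (J - I)) + card (I - J)" using rank_Un_le_card fin by simp
    finally show ?thesis .
  qed
  moreover have "card (I - J) < card (J - I)"
    using card_Int_Diff[of I J] card_Int_Diff[of J I] fin \<open>card I < card J\<close>
    by (simp add: Int_commute)
  ultimately show False by simp
qed

lemma matroid_dual: "matroid E (dual_indep E indep)"
  unfolding matroid_def
proof (intro conjI allI impI)
  fix I J
  assume "dual_indep E indep J \<and> I \<subseteq> J"
  moreover have "rank (E - J) \<le> rank (E - I)" "rank (E - I) \<le> rank E"
    using calculation by (auto intro: rank_mono)
  ultimately show "dual_indep E indep I" using dual_indep_iff by auto
qed (use finite_ground dual_indep_iff dual_indep_augment in auto)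

lemma rank_add_dual_rank: "mrank (dual_indep E indep) E + rank E = card E"
proof -
  interpret dual: matroid_on E "dual_indep E indep" by (rule matroid_on.intro, rule matroid_dual)
  obtain I where I: "I \<subseteq> E" "dual_indep E indep I" "card I = dual.rank E"
    by (rule dual.rank_witness)
  have "rank E \<le> card (E - I)"
    using I dual_indep_iff rank_le_card[of "E - I"] finite_ground by auto
  then have le: "dual.rank E + rank E \<le> card E"
    using I card_mono[OF finite_ground I(1)] finite_ground by (simp add: card_Diff_subset finite_subset)
  obtain K where K: "K \<subseteq> E" "indep K" "card K = rank E" by (rule rank_witness)
  have "rank K = rank E" using card_le_rank[of K K] K rank_mono[of K E] by simp
  then have "dual_indep E indep (E - K)" using dual_indep_iff K by (simp add: double_diff)
  then have "card (E - K) \<le> dual.rank E" using dual.card_le_rank by blast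
  then show ?thesis
    using le K card_mono[OF finite_ground K(1)] finite_ground by (simp add: card_Diff_subset finite_subset)
qed

end

definition biflat_le :: "'a set \<times> 'a set \<Rightarrow> 'a set \<times> 'a set \<Rightarrow> bool" where
  "biflat_le p q \<longleftrightarrow> fst p \<subseteq> fst q \<and> snd q \<subseteq> snd p"

lemma compatible_iff_biflat_le: "compatible p q \<longleftrightarrow> biflat_le p q \<or> biflat_le q p"
  unfolding compatible_def biflat_le_def by (auto split: prod.splits)

lemma biflag_insert:
  assumes "biflag E indep S" "biflat E indep p" "\<forall>q\<in>S. compatible p q"
    and "y \<in> E" "y \<notin> fst p \<inter> snd p" "\<forall>q\<in>S. y \<notin> fst q \<inter> snd q"
  shows "biflag E indep (insert p S)"
proof -
  have "compatible q p" if "q \<in> S" for q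
    using assms(3) that by (auto simp: compatible_iff_biflat_le)
  moreover have "compatible p p" by (simp add: compatible_iff_biflat_le biflat_le_def)
  moreover have "y \<notin> (\<Union>(F, G)\<in>insert p S. F \<inter> G)"
    using assms(5,6) by auto
  ultimately show ?thesis using assms unfolding biflag_def by auto
qed

locale loopless_coloopless_matroid = matroid_on +
  assumes no_loop: "\<not> loop E indep x" and no_coloop: "\<not> coloop E indep x"
begin

sublocale dual: matroid_on E "dual_indep E indep"
  by (rule matroid_on.intro, rule matroid_dual)

lemma indep_singleton: "x \<in> E \<Longrightarrow> indep {x}"
  using no_loop[of x] unfolding loop_def by auto

lemma dual_indep_singleton: "x \<in> E \<Longrightarrow> dual_indep E indep {x}"
  using no_coloop[of x] unfolding coloop_def dual_indep_def by auto

lemma rank_pos_nonempty: "A \<noteq> {} \<Longrightarrow> A \<subseteq> E \<Longrightarrow> 0 < rank A"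
  using rank_pos indep_singleton by blast

lemma dual_rank_pos_nonempty: "A \<noteq> {} \<Longrightarrow> A \<subseteq> E \<Longrightarrow> 0 < dual.rank A"
  using dual.rank_pos dual_indep_singleton by blast

lemma flat_empty: "flat E indep {}"
  using flat_empty_if_singletons_indep indep_singleton by blast

lemma dual_flat_empty: "flat E (dual_indep E indep) {}"
  using dual.flat_empty_if_singletons_indep dual_indep_singleton by blast

definition avoiding_biflats :: "'a \<Rightarrow> ('a set \<times> 'a set) set" where
  "avoiding_biflats y = {p. biflat E indep p \<and> y \<notin> fst p \<inter> snd p}"

lemma pair_in_avoiding_biflats:
  "(F, G) \<in> avoiding_biflats y \<longleftrightarrow> flat E indep F \<and> flat E (dual_indep E indep) G \<and>
     F \<noteq> {} \<and> G \<noteq> {} \<and> \<not> (F = E \<and> G = E) \<and> F \<union> G = E \<and> y \<notin> F \<inter> G"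
  unfolding avoiding_biflats_def biflat_def by auto

text \<open>Along a saturated chain of y-avoiding biflats F|G every step raises rank F or lowers
  the dual rank of G, and both happen at the single step where y passes from G to F;
  the indicator compensates for that step.\<close>
definition potential :: "'a \<Rightarrow> 'a set \<times> 'a set \<Rightarrow> int" where
  "potential y p = int (rank (fst p)) + int (dual.rank E) - int (dual.rank (snd p))
     - of_bool (y \<notin> snd p)"

lemma potential_range:
  assumes y: "y \<in> E" and p: "p \<in> avoiding_biflats y"
  shows "potential y p \<in> {1..int (card E) - 2}"
proof -
  obtain F G where pFG: "p = (F, G)" by (cases p)
  have F: "flat E indep F" "F \<noteq> {}" "F \<subseteq> E" and G: "flat E (dual_indep E indep) G" "G \<noteq> {}" "G \<subseteq> E"
    and cover: "F \<union> G = E" and avoid: "y \<notin> F \<inter> G"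
    using p pair_in_avoiding_biflats flat_subset_ground dual.flat_subset_ground unfolding pFG by auto
  have "0 < rank F" "rank F \<le> rank E" "0 < dual.rank G" "dual.rank G \<le> dual.rank E"
    using F G rank_pos_nonempty dual_rank_pos_nonempty rank_mono dual.rank_mono by auto
  moreover have "rank F < rank E" if "y \<in> G"
    using rank_flat_psubset[OF F(1)] F(3) avoid y that by blast
  moreover have "dual.rank G < dual.rank E" if "y \<notin> G"
    using dual.rank_flat_psubset[OF G(1)] G(3) y that by blast
  ultimately show ?thesis
    using rank_add_dual_rank unfolding potential_def pFG by (cases "y \<in> G") auto
qed

lemma potential_strict_mono:
  assumes y: "y \<in> E" and p: "p \<in> avoiding_biflats y" and q: "q \<in> avoiding_biflats y"
    and "biflat_le p q" "p \<noteq> q"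
  shows "potential y p < potential y q"
proof -
  obtain F G F' G' where pFG: "p = (F, G)" and qFG: "q = (F', G')" by (cases p, cases q)
  have sub: "F \<subseteq> F'" "G' \<subseteq> G" and ne: "F \<noteq> F' \<or> G \<noteq> G'"
    using assms(4,5) unfolding pFG qFG biflat_le_def by auto
  have F: "flat E indep F" "F' \<subseteq> E" and G: "flat E (dual_indep E indep) G'" "G \<subseteq> E"
    using p q pair_in_avoiding_biflats flat_subset_ground dual.flat_subset_ground
    unfolding pFG qFG by auto
  have "rank F \<le> rank F'" "dual.rank G' \<le> dual.rank G"
    using sub rank_mono dual.rank_mono by auto
  moreover have "rank F < rank F'" if "F \<noteq> F'"
    using rank_flat_psubset[OF F(1)] sub F(2) that by blast
  moreover have "dual.rank G' < dual.rank G" if "G \<noteq> G'"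
    using dual.rank_flat_psubset[OF G(1)] sub G(2) that by blast
  ultimately have "int (rank F) + of_bool (F \<noteq> F') \<le> int (rank F')"
    "int (dual.rank G') + of_bool (G \<noteq> G') \<le> int (dual.rank G)"
    by (cases "F = F'"; cases "G = G'"; simp)+
  moreover have "F \<noteq> F'" if "y \<in> G" "y \<notin> G'"
  proof -
    have "y \<notin> F" "F' \<union> G' = E"
      using p q that pair_in_avoiding_biflats unfolding pFG qFG by auto
    then show ?thesis using y that by auto
  qed
  moreover have "y \<in> G" if "y \<in> G'" using sub that by blast
  ultimately show ?thesis
    using ne unfolding potential_def pFG qFG
    by (cases "F = F'"; cases "G = G'"; cases "y \<in> G"; cases "y \<in> G'") simp_all
qed

lemma avoiding_biflats_nonempty:
  assumes y: "y \<in> E" and "3 \<le> card E"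
  shows "avoiding_biflats y \<noteq> {}"
proof -
  have "2 \<le> rank E \<or> 2 \<le> dual.rank E" using rank_add_dual_rank assms(2) by linarith
  then show ?thesis
  proof
    assume "2 \<le> rank E"
    then obtain F where "flat E indep F" "{} \<subset> F" "F \<subset> E" "y \<notin> F"
      using flat_between[OF flat_empty flat_ground, of y] rank_empty by auto
    then have "(F, E) \<in> avoiding_biflats y"
      using dual.flat_ground by (auto simp: pair_in_avoiding_biflats)
    then show ?thesis by blast
  next
    assume "2 \<le> dual.rank E"
    then obtain G where "flat E (dual_indep E indep) G" "{} \<subset> G" "G \<subset> E" "y \<notin> G"
      using dual.flat_between[OF dual_flat_empty dual.flat_ground, of y] dual.rank_empty by auto
    then have "(E, G) \<in> avoiding_biflats y"
      using flat_ground by (auto simp: pair_in_avoiding_biflats)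
    then show ?thesis by blast
  qed
qed

lemma avoiding_biflat_below:
  assumes y: "y \<in> E" and p: "p \<in> avoiding_biflats y" and pot: "1 < potential y p"
  shows "\<exists>q\<in>avoiding_biflats y. biflat_le q p \<and> q \<noteq> p"
proof -
  obtain F G where pFG: "p = (F, G)" by (cases p)
  have F: "flat E indep F" "F \<noteq> {}" "F \<subseteq> E" and G: "flat E (dual_indep E indep) G" "G \<subseteq> E"
    and cover: "F \<union> G = E" and avoid: "y \<notin> F \<inter> G"
    using p flat_subset_ground dual.flat_subset_ground unfolding pFG
    by (auto simp: pair_in_avoiding_biflats)
  have "0 < rank F" using rank_pos_nonempty F by blast
  then have "2 \<le> rank F \<or> (y \<notin> G \<and> dual.rank G + 2 \<le> dual.rank E) \<or>
      (y \<in> G \<and> dual.rank G < dual.rank E)"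
    using pot unfolding potential_def pFG by (cases "y \<in> G"; simp; linarith)
  then consider (shrink_F) "2 \<le> rank F" | (grow_G) "y \<notin> G" "dual.rank G + 2 \<le> dual.rank E"
    | (whole_G) "y \<in> G" "dual.rank G < dual.rank E"
    by blast
  then show ?thesis
  proof cases
    case shrink_F
    then obtain F'' where F'': "flat E indep F''" "{} \<subset> F''" "F'' \<subset> F" "y \<notin> F''"
      using flat_between[OF flat_empty F(1), of y] rank_empty by auto
    then have "(F'', E) \<in> avoiding_biflats y"
      using F(3) dual.flat_ground by (auto simp: pair_in_avoiding_biflats)
    moreover have "biflat_le (F'', E) p" "(F'', E) \<noteq> p"
      using F'' G(2) unfolding pFG biflat_le_def by auto
    ultimately show ?thesis by blast
  next
    case grow_G
    then obtain G'' where G'': "flat E (dual_indep E indep) G''" "G \<subset> G''" "G'' \<subset> E" "y \<notin> G''"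
      using dual.flat_between[OF G(1) dual.flat_ground G(2), of y] by auto
    then have "(F, G'') \<in> avoiding_biflats y"
      using F cover by (auto simp: pair_in_avoiding_biflats)
    moreover have "biflat_le (F, G'') p" "(F, G'') \<noteq> p"
      using G'' unfolding pFG biflat_le_def by auto
    ultimately show ?thesis by blast
  next
    case whole_G
    then have "G \<noteq> E" by auto
    moreover have "(F, E) \<in> avoiding_biflats y"
      using F avoid y whole_G dual.flat_ground by (auto simp: pair_in_avoiding_biflats)
    moreover have "biflat_le (F, E) p" "(F, E) \<noteq> p"
      using \<open>G \<noteq> E\<close> G(2) unfolding pFG biflat_le_def by auto
    ultimately show ?thesis by blast
  qed
qed

lemma avoiding_biflat_above:
  assumes y: "y \<in> E" and p: "p \<in> avoiding_biflats y" and pot: "potential y p < int (card E) - 2"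
  shows "\<exists>q\<in>avoiding_biflats y. biflat_le p q \<and> q \<noteq> p"
proof -
  obtain F G where pFG: "p = (F, G)" by (cases p)
  have F: "flat E indep F" "F \<subseteq> E" and G: "flat E (dual_indep E indep) G" "G \<noteq> {}" "G \<subseteq> E"
    and cover: "F \<union> G = E" and avoid: "y \<notin> F \<inter> G"
    using p flat_subset_ground dual.flat_subset_ground unfolding pFG
    by (auto simp: pair_in_avoiding_biflats)
  have "0 < dual.rank G" using dual_rank_pos_nonempty G by blast
  then have "2 \<le> dual.rank G \<or> (y \<in> G \<and> rank F + 2 \<le> rank E) \<or> (y \<notin> G \<and> rank F < rank E)"
    using pot rank_add_dual_rank unfolding potential_def pFG by (cases "y \<in> G"; simp; linarith)
  then consider (shrink_G) "2 \<le> dual.rank G" | (grow_F) "y \<in> G" "rank F + 2 \<le> rank E"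
    | (whole_F) "y \<notin> G" "rank F < rank E"
    by blast
  then show ?thesis
  proof cases
    case shrink_G
    then obtain G'' where G'': "flat E (dual_indep E indep) G''" "{} \<subset> G''" "G'' \<subset> G" "y \<notin> G''"
      using dual.flat_between[OF dual_flat_empty G(1), of y] dual.rank_empty by auto
    then have "(E, G'') \<in> avoiding_biflats y"
      using G(3) flat_ground by (auto simp: pair_in_avoiding_biflats)
    moreover have "biflat_le p (E, G'')" "(E, G'') \<noteq> p"
      using G'' F(2) unfolding pFG biflat_le_def by auto
    ultimately show ?thesis by blast
  next
    case grow_F
    then obtain F'' where F'': "flat E indep F''" "F \<subset> F''" "F'' \<subset> E" "y \<notin> F''"
      using flat_between[OF F(1) flat_ground F(2), of y] avoid by auto
    then have "(F'', G) \<in> avoiding_biflats y"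
      using G cover by (auto simp: pair_in_avoiding_biflats)
    moreover have "biflat_le p (F'', G)" "(F'', G) \<noteq> p"
      using F'' unfolding pFG biflat_le_def by auto
    ultimately show ?thesis by blast
  next
    case whole_F
    then have "F \<noteq> E" by auto
    moreover have "(E, G) \<in> avoiding_biflats y"
      using G y whole_F flat_ground by (auto simp: pair_in_avoiding_biflats)
    moreover have "biflat_le p (E, G)" "(E, G) \<noteq> p"
      using \<open>F \<noteq> E\<close> F(2) unfolding pFG biflat_le_def by auto
    ultimately show ?thesis by blast
  qed
qed

lemma avoiding_biflat_between:
  assumes y: "y \<in> E" and p: "p \<in> avoiding_biflats y" and q: "q \<in> avoiding_biflats y"
    and "biflat_le p q" and pot: "potential y p + 2 \<le> potential y q"
  shows "\<exists>s\<in>avoiding_biflats y. biflat_le p s \<and> biflat_le s q \<and> s \<noteq> p \<and> s \<noteq> q"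
proof -
  obtain F G F' G' where pFG: "p = (F, G)" and qFG: "q = (F', G')" by (cases p, cases q)
  have sub: "F \<subseteq> F'" "G' \<subseteq> G" using assms(4) unfolding pFG qFG biflat_le_def by auto
  have F: "flat E indep F" "F \<noteq> {}" and F': "flat E indep F'" "F' \<noteq> {}" "F' \<subseteq> E"
    and G: "flat E (dual_indep E indep) G" "G \<noteq> {}" "G \<subseteq> E"
    and G': "flat E (dual_indep E indep) G'" "G' \<noteq> {}"
    and cover: "F \<union> G = E" "F' \<union> G' = E" and avoid: "y \<notin> F \<inter> G" "y \<notin> F' \<inter> G'"
    using p q flat_subset_ground dual.flat_subset_ground unfolding pFG qFG
    by (auto simp: pair_in_avoiding_biflats)
  have "rank F \<le> rank F'" "dual.rank G' \<le> dual.rank G"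
    using sub rank_mono dual.rank_mono by auto
  then have "rank F + 2 \<le> rank F' \<or> dual.rank G' + 2 \<le> dual.rank G \<or>
      (rank F < rank F' \<and> dual.rank G' < dual.rank G \<and> (y \<in> G \<longrightarrow> y \<in> G'))"
    using pot sub(2) unfolding potential_def pFG qFG by (cases "y \<in> G"; cases "y \<in> G'"; auto)
  then consider (grow_F) "rank F + 2 \<le> rank F'" | (shrink_G) "dual.rank G' + 2 \<le> dual.rank G"
    | (swap) "rank F < rank F'" "dual.rank G' < dual.rank G" "y \<in> G \<longrightarrow> y \<in> G'"
    by blast
  then show ?thesis
  proof cases
    case grow_F
    then obtain F'' where F'': "flat E indep F''" "F \<subset> F''" "F'' \<subset> F'" "y \<notin> F \<longrightarrow> y \<notin> F''"
      using flat_between[OF F(1) F'(1) sub(1), of y] by auto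
    then have "(F'', G) \<in> avoiding_biflats y"
      using G cover(1) avoid(1) F'(3) by (auto simp: pair_in_avoiding_biflats)
    moreover have "biflat_le p (F'', G)" "biflat_le (F'', G) q" "(F'', G) \<noteq> p" "(F'', G) \<noteq> q"
      using F'' sub unfolding pFG qFG biflat_le_def by auto
    ultimately show ?thesis by blast
  next
    case shrink_G
    then obtain G'' where G'': "flat E (dual_indep E indep) G''" "G' \<subset> G''" "G'' \<subset> G"
      "y \<notin> G' \<longrightarrow> y \<notin> G''"
      using dual.flat_between[OF G'(1) G(1) sub(2), of y] by auto
    then have "(F', G'') \<in> avoiding_biflats y"
      using F' G(3) cover(2) avoid(2) by (auto simp: pair_in_avoiding_biflats)
    moreover have "biflat_le p (F', G'')" "biflat_le (F', G'') q" "(F', G'') \<noteq> p" "(F', G'') \<noteq> q"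
      using G'' sub unfolding pFG qFG biflat_le_def by auto
    ultimately show ?thesis by blast
  next
    case swap
    then have "F \<noteq> F'" "G \<noteq> G'" by auto
    moreover have "(F', G) \<in> avoiding_biflats y"
      using F' G cover avoid sub y swap(3) by (auto simp: pair_in_avoiding_biflats)
    moreover have "biflat_le p (F', G)" "biflat_le (F', G) q" "(F', G) \<noteq> p" "(F', G) \<noteq> q"
      using \<open>F \<noteq> F'\<close> \<open>G \<noteq> G'\<close> sub unfolding pFG qFG biflat_le_def by auto
    ultimately show ?thesis by blast
  qed
qed

lemma gap_filling_potential_biflats:
  assumes "y \<in> E"
  shows "gap_filling_potential biflat_le (avoiding_biflats y) (potential y) (int (card E) - 2)"
proof
  show "biflat_le p s" if "biflat_le p q" "biflat_le q s" for p q s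
    using that unfolding biflat_le_def by blast
qed (use assms potential_strict_mono potential_range avoiding_biflats_nonempty
    avoiding_biflat_below avoiding_biflat_above avoiding_biflat_between in auto)

lemma card_maximal_biflag:
  assumes "maximal_biflag E indep S"
  shows "card S = card E - 2"
proof -
  have S: "biflag E indep S" and maximal: "\<And>T. biflag E indep T \<Longrightarrow> S \<subseteq> T \<Longrightarrow> T = S"
    using assms unfolding maximal_biflag_def by auto
  have compat: "compatible p q" if "p \<in> S" "q \<in> S" for p q
    using S that unfolding biflag_def by blast
  have "(\<Union>(F, G)\<in>S. F \<inter> G) \<subseteq> E"
    using S unfolding biflag_def biflat_def by fastforce
  then obtain y where y: "y \<in> E" "\<forall>p\<in>S. y \<notin> fst p \<inter> snd p"
    using S unfolding biflag_def by fastforce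
  interpret gap_filling_potential biflat_le "avoiding_biflats y" "potential y" "int (card E) - 2"
    using gap_filling_potential_biflats[OF y(1)] .
  have "Complete_Partial_Order.chain biflat_le S"
    by (rule chainI) (use compat compatible_iff_biflat_le in blast)
  moreover have "S \<subseteq> avoiding_biflats y" using S y unfolding biflag_def avoiding_biflats_def by auto
  moreover have "x \<in> S" if "x \<in> avoiding_biflats y" "\<forall>s\<in>S. biflat_le x s \<or> biflat_le s x" for x
  proof -
    have "biflat E indep x" "y \<notin> fst x \<inter> snd x" "\<forall>q\<in>S. compatible x q"
      using that unfolding avoiding_biflats_def compatible_iff_biflat_le by auto
    then have "biflag E indep (insert x S)" using biflag_insert[OF S _ _ y(1) _ y(2)] by blast
    then show ?thesis using maximal by blast
  qed
  ultimately have "card S = nat (int (card E) - 2)" by (rule card_maximal_chain)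
  then show ?thesis by simp
qed

end

theorem mainTheorem2:
  fixes n r :: nat and indep :: "nat set \<Rightarrow> bool" and S :: "(nat set \<times> nat set) set"
  assumes "matroid {0..n} indep"
    and "\<forall>x. \<not> loop {0..n} indep x"
    and "\<forall>x. \<not> coloop {0..n} indep x"
    and "mrank indep {0..n} = r + 1"
    and "maximal_biflag {0..n} indep S"
  shows "card S = n - 1"
proof -
  interpret loopless_coloopless_matroid "{0..n}" indep
    using assms(1-3) by unfold_locales auto
  show ?thesis using card_maximal_biflag[OF assms(5)] by simp
qed

end
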